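(* Let $F:\{0,1\}^4\to\mathbb{Q}_{\ge0}$. Suppose that $F(\overline{e_1}),F(\overline{e_2}),F(\overline{e_3}),F(\overline{e_4})$ are not all zero, that $F(x_1,x_2,x_3,x_4)=0$ whenever $x_1+x_2+x_3+x_4$ is even, and that for all $x_1,x_2,x_3,x_4\in\{0,1\}$, $F(x_1,x_2,x_3,x_4)F(1-x_1,1-x_2,1-x_3,1-x_4)\le F(x_1,x_2,1-x_3,1-x_4)F(1-x_1,1-x_2,x_3,x_4)+F(x_1,1-x_2,x_3,1-x_4)F(1-x_1,x_2,1-x_3,x_4)+F(x_1,1-x_2,1-x_3,x_4)F(1-x_1,x_2,x_3,1-x_4)$. Then $F$ has a matchings circuit.
   Context: $e_i\in\{0,1\}^4$ is the $i$-th unit vector and $\overline{x}$ denotes the complement $(1-x_1,\dots,1-x_4)$. A matchings circuit $G$ consists of: a finite set $J$ of incidences; a finite vertex set $V$ with sets $J_v$ partitioning $J$; a set $A\subseteq J$ of external edges; a partition $E$ of $J\setminus A$ into pairs (internal edges); a rational edge-weight $w(e)\ge0$ for each $e\in E$; and a rational fugacity $\lambda(v)\ge0$ for each $v$. For $F'\subseteq A\cup E$, $\deg_{F'}(v)$ is the number of incidences in $J_v$ belonging to edges of $F'$; $\mathrm{wt}_G(F')=0$ if some $\deg_{F'}(v)\ge2$, else $\prod_{v:\deg_{F'}(v)=0}\lambda(v)\prod_{e\in F'\cap E}w(e)$. The signature $[\![G]\!]:\{0,1\}^A\to\mathbb{Q}_{\ge0}$ is $[\![G]\!](x)=\sum\mathrm{wt}_G(F')$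 over $F'\subseteq A\cup E$ with $F'\cap A=\{a:x_a=1\}$. $F$ has a matchings circuit if $F=[\![G]\!]$ for some $G$ with $A$ identified with $\{1,2,3,4\}$. *)

theory Defs
  imports Complex_Main
begin

text \<open>Incidences and vertices are natural numbers.
  inc v is the set J_v of incidences at vertex v; ext i (i = 1..4) is the
  external edge (an incidence in A) identified with the i-th variable, so
  A = ext ` {1..4}; E is the set of internal edges, each a 2-element set of
  incidences; w is the edge weight and lam the fugacity.\<close>

record mcirc =
  J :: "nat set"
  V :: "nat set"
  inc :: "nat \<Rightarrow> nat set"
  ext :: "nat \<Rightarrow> nat"
  E :: "nat set set"
  w :: "nat set \<Rightarrow> rat"
  lam :: "nat \<Rightarrow> rat"

definition ext_set :: "mcirc \<Rightarrow> nat set" where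
  "ext_set G = ext G ` {1..4::nat}"

definition valid_mcirc :: "mcirc \<Rightarrow> bool" where
  "valid_mcirc G \<longleftrightarrow>
     finite (J G) \<and> finite (V G) \<and>
     (\<forall>v\<in>V G. inc G v \<subseteq> J G) \<and>
     (\<forall>v\<in>V G. \<forall>u\<in>V G. u \<noteq> v \<longrightarrow> inc G u \<inter> inc G v = {}) \<and>
     (\<Union>v\<in>V G. inc G v) = J G \<and>
     inj_on (ext G) {1..4} \<and> ext_set G \<subseteq> J G \<and>
     (\<forall>e\<in>E G. card e = 2) \<and>
     (\<forall>e\<in>E G. \<forall>e'\<in>E G. e \<noteq> e' \<longrightarrow> e \<inter> e' = {}) \<and>
     \<Union>(E G) = J G - ext_set G \<and>
     (\<forall>e\<in>E G. w G e \<ge> 0) \<and>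
     (\<forall>v\<in>V G. lam G v \<ge> 0)"

definition deg :: "mcirc \<Rightarrow> nat set \<Rightarrow> nat set set \<Rightarrow> nat \<Rightarrow> nat" where
  "deg G S M v = card (inc G v \<inter> (S \<union> \<Union>M))"

definition wt :: "mcirc \<Rightarrow> nat set \<Rightarrow> nat set set \<Rightarrow> rat" where
  "wt G S M = (if \<exists>v\<in>V G. deg G S M v \<ge> 2 then 0
     else (\<Prod>v\<in>{v\<in>V G. deg G S M v = 0}. lam G v) * (\<Prod>e\<in>M. w G e))"

definition active :: "nat \<Rightarrow> nat \<Rightarrow> nat \<Rightarrow> nat \<Rightarrow> nat set" where
  "active x1 x2 x3 x4 = {i. (i = 1 \<and> x1 = 1) \<or> (i = 2 \<and> x2 = 1) \<or>
                           (i = 3 \<and> x3 = 1) \<or> (i = 4 \<and> x4 = 1)}"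

definition signature :: "mcirc \<Rightarrow> nat \<Rightarrow> nat \<Rightarrow> nat \<Rightarrow> nat \<Rightarrow> rat" where
  "signature G x1 x2 x3 x4 =
     (\<Sum>M\<in>Pow (E G). wt G (ext G ` active x1 x2 x3 x4) M)"

definition has_matchings_circuit :: "(nat \<Rightarrow> nat \<Rightarrow> nat \<Rightarrow> nat \<Rightarrow> rat) \<Rightarrow> bool" where
  "has_matchings_circuit F \<longleftrightarrow>
     (\<exists>G. valid_mcirc G \<and>
        (\<forall>x1\<in>{0,1}. \<forall>x2\<in>{0,1}. \<forall>x3\<in>{0,1}. \<forall>x4\<in>{0,1}.
           F x1 x2 x3 x4 = signature G x1 x2 x3 x4))"

end

theory Submission
  imports Defs
begin

text \<open>Realise F by the complete graph K5 with all fugacities 0, the external edges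
  attached to vertices 1..4, spokes {i,5} of weight b i = F(complement of e i) and
  nonnegative weights on the six edges among 1..4. Its signature counts perfect matchings:
  at the complement of e i the only matching is the spoke {i,5}, at e i the three matchings
  of the K4 left over each pair a spoke {j,5} with an edge of K4, giving
  a i = F(e i) = \<Sum>j. b j * r i j, and inputs of even weight leave an odd number of
  vertices. Solving for r \<ge> 0 reduces to finding nonnegative weights on K4 with
  prescribed vertex degrees c i = a i * b i; the hypothesis on F at e i is exactly the
  polygon inequality c i \<le> \<Sum>j\<noteq>i. c j that makes this possible.\<close>

definition perfect :: "mcirc \<Rightarrow> nat set \<Rightarrow> bool" where
  "perfect G T \<longleftrightarrow> (\<forall>v\<in>V G. card (inc G v \<inter> T) = 1)"

definition partial :: "mcirc \<Rightarrow> nat set \<Rightarrow> bool" where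
  "partial G T \<longleftrightarrow> (\<forall>v\<in>V G. card (inc G v \<inter> T) \<le> 1)"

lemma perfect_imp_partial: "perfect G T \<Longrightarrow> partial G T"
  by (simp add: perfect_def partial_def)

lemma partial_subset:
  assumes "partial G T" "S \<subseteq> T" "\<forall>v\<in>V G. finite (inc G v)"
  shows "partial G S"
  unfolding partial_def
proof
  fix v assume "v \<in> V G"
  then have "card (inc G v \<inter> S) \<le> card (inc G v \<inter> T)"
    using assms(2,3) by (intro card_mono) auto
  also have "\<dots> \<le> 1" using \<open>v \<in> V G\<close> assms(1) by (simp add: partial_def)
  finally show "card (inc G v \<inter> S) \<le> 1" .
qed

lemma wt_zero_fugacity:
  assumes "finite (V G)" "\<forall>v\<in>V G. lam G v = 0"
  shows "wt G S M = (if perfect G (S \<union> \<Union>M) then prod (w G) M else 0)"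
proof (cases "\<exists>v\<in>V G. deg G S M v \<ge> 2")
  case True
  then show ?thesis by (auto simp: wt_def perfect_def deg_def)
next
  case no_double: False
  show ?thesis
  proof (cases "perfect G (S \<union> \<Union>M)")
    case True
    then have "{v\<in>V G. deg G S M v = 0} = {}" by (auto simp: perfect_def deg_def)
    with no_double True show ?thesis by (simp only: wt_def) simp
  next
    case False
    with no_double obtain v where "v \<in> V G" "deg G S M v = 0"
      by (force simp: perfect_def deg_def)
    with assms have "(\<Prod>v\<in>{v\<in>V G. deg G S M v = 0}. lam G v) = 0"
      by (subst prod_zero_iff) auto
    with no_double False show ?thesis by (simp add: wt_def)
  qed
qed

text \<open>The test on partial prunes branches that cannot be completed to a perfect
  matching; it makes the recursion cheap enough to evaluate by simplification.\<close>
fun matching_sum :: "mcirc \<Rightarrow> nat set \<Rightarrow> nat set list \<Rightarrow> rat" where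
  "matching_sum G S [] = (if perfect G S then 1 else 0)"
| "matching_sum G S (e # es) = matching_sum G S es
     + (if partial G (S \<union> e) then w G e * matching_sum G (S \<union> e) es else 0)"

lemma sum_perfect_eq_matching_sum:
  assumes "\<forall>v\<in>V G. finite (inc G v)" "distinct es"
  shows "(\<Sum>M\<in>Pow (set es). if perfect G (S \<union> \<Union>M) then prod (w G) M else 0)
         = matching_sum G S es"
  using assms(2)
proof (induction es arbitrary: S)
  case Nil
  then show ?case by simp
next
  case (Cons e es)
  let ?f = "\<lambda>S M. if perfect G (S \<union> \<Union>M) then prod (w G) M else 0"
  have e_new: "e \<notin> set es" and IH: "\<And>S. sum (?f S) (Pow (set es)) = matching_sum G S es"
    using Cons by auto
  have "inj_on (insert e) (Pow (set es))"
    using e_new by (auto simp: inj_on_def)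
  then have "sum (?f S) (insert e ` Pow (set es)) = (\<Sum>M\<in>Pow (set es). ?f S (insert e M))"
    by (rule sum.reindex[unfolded comp_def])
  also have "\<dots> = w G e * sum (?f (S \<union> e)) (Pow (set es))"
    unfolding sum_distrib_left
  proof (rule sum.cong)
    fix M assume "M \<in> Pow (set es)"
    then have "e \<notin> M" "finite M" using e_new finite_subset by auto
    then show "?f S (insert e M) = w G e * ?f (S \<union> e) M"
      by (simp add: Un_assoc)
  qed simp
  also have "\<dots> = (if partial G (S \<union> e) then w G e * matching_sum G (S \<union> e) es else 0)"
  proof -
    have "sum (?f (S \<union> e)) (Pow (set es)) = 0" if "\<not> partial G (S \<union> e)"
      using that partial_subset[OF perfect_imp_partial _ assms(1)]
      by (intro sum.neutral) (metis Un_upper1)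
    then show ?thesis using IH by simp
  qed
  finally have "sum (?f S) (insert e ` Pow (set es))
      = (if partial G (S \<union> e) then w G e * matching_sum G (S \<union> e) es else 0)" .
  moreover have "sum (?f S) (Pow (set (e # es)))
      = sum (?f S) (Pow (set es)) + sum (?f S) (insert e ` Pow (set es))"
    unfolding set_simps Pow_insert using e_new by (intro sum.union_disjoint) auto
  ultimately show ?case
    using IH by simp
qed

lemma signature_zero_fugacity:
  assumes "finite (V G)" "\<forall>v\<in>V G. finite (inc G v)" "\<forall>v\<in>V G. lam G v = 0"
    and "E G = set es" "distinct es"
  shows "signature G x1 x2 x3 x4 = matching_sum G (ext G ` active x1 x2 x3 x4) es"
  using assms
  by (simp add: signature_def wt_zero_fugacity sum_perfect_eq_matching_sum)

text \<open>Vertex i \<le> 4 owns the external incidence i, incidence 10 * i + j is the end at i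
  of the edge {i,j}, and 5 is the centre.\<close>
definition K5_inc :: "nat \<Rightarrow> nat set" where
  "K5_inc v = (if v = 1 then {1,12,13,14,15} else if v = 2 then {2,21,23,24,25} else
     if v = 3 then {3,31,32,34,35} else if v = 4 then {4,41,42,43,45} else
     if v = 5 then {51,52,53,54} else {})"

definition K5_edges :: "nat set list" where
  "K5_edges = [{12,21},{13,31},{14,41},{15,51},{23,32},{24,42},{25,52},{34,43},{35,53},{45,54}]"

definition K5_circuit :: "(nat set \<Rightarrow> rat) \<Rightarrow> mcirc" where
  "K5_circuit W = \<lparr>J = {1,2,3,4} \<union> \<Union>(set K5_edges), V = {1,2,3,4,5}, inc = K5_inc, ext = id,
     E = set K5_edges, w = W, lam = (\<lambda>_. 0)\<rparr>"

lemma valid_K5_circuit: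
  assumes "\<forall>e\<in>set K5_edges. W e \<ge> 0"
  shows "valid_mcirc (K5_circuit W)"
proof -
  have "ext_set (K5_circuit W) = {1,2,3,4}"
    by (auto simp: ext_set_def K5_circuit_def)
  with assms show ?thesis
    by (simp add: valid_mcirc_def K5_circuit_def K5_inc_def K5_edges_def; auto)
qed

lemma signature_K5_circuit:
  "signature (K5_circuit W) x1 x2 x3 x4 = matching_sum (K5_circuit W) (active x1 x2 x3 x4) K5_edges"
proof -
  have "signature (K5_circuit W) x1 x2 x3 x4
      = matching_sum (K5_circuit W) (ext (K5_circuit W) ` active x1 x2 x3 x4) K5_edges"
    by (rule signature_zero_fugacity)
      (auto simp: K5_circuit_def K5_inc_def K5_edges_def doubleton_eq_iff)
  then show ?thesis by (simp add: K5_circuit_def)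
qed

lemma active_eq:
  "active x1 x2 x3 x4 = (if x1 = 1 then {1} else {}) \<union> (if x2 = 1 then {2} else {})
     \<union> (if x3 = 1 then {3} else {}) \<union> (if x4 = 1 then {4} else {})"
  by (auto simp: active_def)

lemma K5_circuit_sel [simp]:
  "V (K5_circuit W) = {1,2,3,4,5}" "inc (K5_circuit W) = K5_inc" "w (K5_circuit W) = W"
  by (simp_all add: K5_circuit_def)

lemma partial_K5_circuit:
  "partial (K5_circuit W) T \<longleftrightarrow> card ({1,12,13,14,15} \<inter> T) \<le> 1 \<and> card ({2,21,23,24,25} \<inter> T) \<le> 1
     \<and> card ({3,31,32,34,35} \<inter> T) \<le> 1 \<and> card ({4,41,42,43,45} \<inter> T) \<le> 1
     \<and> card ({51,52,53,54} \<inter> T) \<le> 1"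
  by (simp add: partial_def K5_inc_def)

lemma perfect_K5_circuit:
  "perfect (K5_circuit W) T \<longleftrightarrow> card ({1,12,13,14,15} \<inter> T) = 1 \<and> card ({2,21,23,24,25} \<inter> T) = 1
     \<and> card ({3,31,32,34,35} \<inter> T) = 1 \<and> card ({4,41,42,43,45} \<inter> T) = 1
     \<and> card ({51,52,53,54} \<inter> T) = 1"
  by (simp add: perfect_def K5_inc_def)

text \<open>An edge among 1..4 carries the r-value of the complementary pair: deleting
  vertex i, the matching with spoke {j,5} then contributes b j * r i j.\<close>
definition K5_weight :: "(nat \<Rightarrow> rat) \<Rightarrow> (nat \<Rightarrow> nat \<Rightarrow> rat) \<Rightarrow> nat set \<Rightarrow> rat" where
  "K5_weight b r e =
     (if e = {15,51} then b 1 else if e = {25,52} then b 2 else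
      if e = {35,53} then b 3 else if e = {45,54} then b 4 else
      if e = {12,21} then r 3 4 else if e = {13,31} then r 2 4 else if e = {14,41} then r 2 3 else
      if e = {23,32} then r 1 4 else if e = {24,42} then r 1 3 else r 1 2)"

lemma K5_weight_simps:
  "K5_weight b r {15,51} = b 1" "K5_weight b r {25,52} = b 2"
  "K5_weight b r {35,53} = b 3" "K5_weight b r {45,54} = b 4"
  "K5_weight b r {12,21} = r 3 4" "K5_weight b r {13,31} = r 2 4" "K5_weight b r {14,41} = r 2 3"
  "K5_weight b r {23,32} = r 1 4" "K5_weight b r {24,42} = r 1 3" "K5_weight b r {34,43} = r 1 2"
  by (simp_all add: K5_weight_def doubleton_eq_iff)

lemma has_matchings_circuit_K5:
  fixes F :: "nat \<Rightarrow> nat \<Rightarrow> nat \<Rightarrow> nat \<Rightarrow> rat"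
    and b :: "nat \<Rightarrow> rat" and r :: "nat \<Rightarrow> nat \<Rightarrow> rat"
  assumes b_nonneg: "\<And>i. b i \<ge> 0" and r_nonneg: "\<And>i j. r i j \<ge> 0"
    and "F 1 0 0 0 = b 2 * r 1 2 + b 3 * r 1 3 + b 4 * r 1 4"
    and "F 0 1 0 0 = b 1 * r 1 2 + b 3 * r 2 3 + b 4 * r 2 4"
    and "F 0 0 1 0 = b 1 * r 1 3 + b 2 * r 2 3 + b 4 * r 3 4"
    and "F 0 0 0 1 = b 1 * r 1 4 + b 2 * r 2 4 + b 3 * r 3 4"
    and "F 0 1 1 1 = b 1" "F 1 0 1 1 = b 2" "F 1 1 0 1 = b 3" "F 1 1 1 0 = b 4"
    and "\<forall>x1\<in>{0,1}. \<forall>x2\<in>{0,1}. \<forall>x3\<in>{0,1}. \<forall>x4\<in>{0,1}.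
           even (x1 + x2 + x3 + x4) \<longrightarrow> F x1 x2 x3 x4 = 0"
  shows "has_matchings_circuit F"
  unfolding has_matchings_circuit_def
proof (intro exI conjI)
  let ?G = "K5_circuit (K5_weight b r)"
  show "valid_mcirc ?G"
    using b_nonneg r_nonneg
    by (intro valid_K5_circuit) (simp add: K5_edges_def K5_weight_simps)
  show "\<forall>x1\<in>{0,1}. \<forall>x2\<in>{0,1}. \<forall>x3\<in>{0,1}. \<forall>x4\<in>{0,1}. F x1 x2 x3 x4 = signature ?G x1 x2 x3 x4"
    using assms
    by (simp add: signature_K5_circuit active_eq K5_edges_def partial_K5_circuit perfect_K5_circuit
        K5_weight_simps algebra_simps)
qed

lemma K4_weights_with_degrees:
  fixes c :: "nat \<Rightarrow> 'a::linordered_field"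
  assumes nonneg: "\<And>i. c i \<ge> 0"
    and "c 1 \<le> c 2 + c 3 + c 4" "c 2 \<le> c 1 + c 3 + c 4"
    and "c 3 \<le> c 1 + c 2 + c 4" "c 4 \<le> c 1 + c 2 + c 3"
  obtains s :: "nat \<Rightarrow> nat \<Rightarrow> 'a" where "\<And>i j. s i j \<ge> 0"
    and "s 1 2 + s 1 3 + s 1 4 = c 1" "s 1 2 + s 2 3 + s 2 4 = c 2"
    and "s 1 3 + s 2 3 + s 3 4 = c 3" "s 1 4 + s 2 4 + s 3 4 = c 4"
proof -
  define S where "S = (c 1 + c 2 + c 3 + c 4) / 2"
  define D where "D i j = c i + c j - S" for i j
  define Q where "Q = (S - \<bar>D 1 2\<bar> - \<bar>D 1 3\<bar> - \<bar>D 1 4\<bar>) / 3"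
  text \<open>Complementary pairs have opposite excess D, so the pair {i,j} and its complement
    receive s i j - s k l = D i j and s i j + s k l = \<bar>D i j\<bar> + Q: the slack Q is shared
    equally by the three perfect matchings of K4.\<close>
  define s where "s i j = (D i j + \<bar>D i j\<bar> + Q) / 2" for i j
  have S2: "2 * S = c 1 + c 2 + c 3 + c 4"
    by (simp add: S_def)
  have "Q \<ge> 0"
    using assms S2 unfolding Q_def D_def by (auto split: abs_split)
  then have s_nonneg: "s i j \<ge> 0" for i j
    unfolding s_def by (simp split: abs_split)
  have "\<bar>D 2 3\<bar> = \<bar>D 1 4\<bar>" "\<bar>D 2 4\<bar> = \<bar>D 1 3\<bar>" "\<bar>D 3 4\<bar> = \<bar>D 1 2\<bar>"
    unfolding D_def using S2 by (simp_all add: abs_minus_commute algebra_simps)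
  then have "s 1 2 + s 1 3 + s 1 4 = c 1" "s 1 2 + s 2 3 + s 2 4 = c 2"
    "s 1 3 + s 2 3 + s 3 4 = c 3" "s 1 4 + s 2 4 + s 3 4 = c 4"
    unfolding s_def Q_def D_def using S2 by (simp_all add: field_simps)
  with s_nonneg show thesis by (rule that)
qed

text \<open>Normally r i j = s i j / (b i * b j), where s has vertex degrees a i * b i. A row
  with b i = 0 instead takes the value a i / B in every entry, B being the sum of all b j;
  then the entries b j * r i j of that row add up to a i.\<close>
definition edge_weight :: "'a::linordered_field \<Rightarrow> 'a \<Rightarrow> 'a \<Rightarrow> 'a \<Rightarrow> 'a \<Rightarrow> 'a \<Rightarrow> 'a" where
  "edge_weight B ai bi aj bj s = (if bi = 0 then ai / B else 0) + (if bj = 0 then aj / B else 0)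
     + (if bi \<noteq> 0 \<and> bj \<noteq> 0 then s / (bi * bj) else 0)"

lemma edge_weight_commute: "edge_weight B ai bi aj bj s = edge_weight B aj bj ai bi s"
  by (simp add: edge_weight_def mult.commute)

lemma edge_weight_nonneg:
  "B > 0 \<Longrightarrow> ai \<ge> 0 \<Longrightarrow> bi \<ge> 0 \<Longrightarrow> aj \<ge> 0 \<Longrightarrow> bj \<ge> 0 \<Longrightarrow> s \<ge> 0
   \<Longrightarrow> edge_weight B ai bi aj bj s \<ge> 0"
  by (simp add: edge_weight_def)

lemma edge_weight_row:
  fixes B :: "'a::linordered_field"
  assumes "B = bi + bj + bk + bl" "B \<noteq> 0" "sj + sk + sl = ai * bi"
    and "bj = 0 \<Longrightarrow> sj = 0" "bk = 0 \<Longrightarrow> sk = 0" "bl = 0 \<Longrightarrow> sl = 0"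
  shows "bj * edge_weight B ai bi aj bj sj + bk * edge_weight B ai bi ak bk sk
       + bl * edge_weight B ai bi al bl sl = ai"
proof (cases "bi = 0")
  case True
  then have "bj * edge_weight B ai bi aj bj sj + bk * edge_weight B ai bi ak bk sk
      + bl * edge_weight B ai bi al bl sl = (bj + bk + bl) * ai / B"
    by (simp add: edge_weight_def add_divide_distrib distrib_right)
  also have "\<dots> = ai" using assms True by simp
  finally show ?thesis .
next
  case False
  have "b * edge_weight B ai bi a b s = s / bi" if "b = 0 \<Longrightarrow> s = 0" for a b s
    using False that by (cases "b = 0") (auto simp: edge_weight_def field_simps)
  then have "bj * edge_weight B ai bi aj bj sj + bk * edge_weight B ai bi ak bk sk
      + bl * edge_weight B ai bi al bl sl = (sj + sk + sl) / bi"
    using assms(4-6) by (simp add: add_divide_distrib)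
  also have "\<dots> = ai" using assms(3) False by simp
  finally show ?thesis .
qed

lemma K4_weights_with_weighted_degrees:
  fixes a b :: "nat \<Rightarrow> 'a::linordered_field"
  assumes a_nonneg: "\<And>i. a i \<ge> 0" and b_nonneg: "\<And>i. b i \<ge> 0"
    and B_pos: "b 1 + b 2 + b 3 + b 4 > 0"
    and "a 1 * b 1 \<le> a 2 * b 2 + a 3 * b 3 + a 4 * b 4"
    and "a 2 * b 2 \<le> a 1 * b 1 + a 3 * b 3 + a 4 * b 4"
    and "a 3 * b 3 \<le> a 1 * b 1 + a 2 * b 2 + a 4 * b 4"
    and "a 4 * b 4 \<le> a 1 * b 1 + a 2 * b 2 + a 3 * b 3"
  obtains r :: "nat \<Rightarrow> nat \<Rightarrow> 'a" where "\<And>i j. r i j \<ge> 0"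
    and "a 1 = b 2 * r 1 2 + b 3 * r 1 3 + b 4 * r 1 4"
    and "a 2 = b 1 * r 1 2 + b 3 * r 2 3 + b 4 * r 2 4"
    and "a 3 = b 1 * r 1 3 + b 2 * r 2 3 + b 4 * r 3 4"
    and "a 4 = b 1 * r 1 4 + b 2 * r 2 4 + b 3 * r 3 4"
proof -
  define B where "B = b 1 + b 2 + b 3 + b 4"
  obtain s :: "nat \<Rightarrow> nat \<Rightarrow> 'a" where s_nonneg: "\<And>i j. s i j \<ge> 0"
    and rows: "s 1 2 + s 1 3 + s 1 4 = a 1 * b 1" "s 1 2 + s 2 3 + s 2 4 = a 2 * b 2"
      "s 1 3 + s 2 3 + s 3 4 = a 3 * b 3" "s 1 4 + s 2 4 + s 3 4 = a 4 * b 4"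
    using K4_weights_with_degrees[of "\<lambda>i. a i * b i"] assms by auto
  define r where "r i j = edge_weight B (a i) (b i) (a j) (b j) (s i j)" for i j
  have r_nonneg: "r i j \<ge> 0" for i j
    unfolding r_def B_def using B_pos a_nonneg b_nonneg s_nonneg by (intro edge_weight_nonneg)
  have zero: "b 1 = 0 \<Longrightarrow> s 1 2 = 0 \<and> s 1 3 = 0 \<and> s 1 4 = 0"
    "b 2 = 0 \<Longrightarrow> s 1 2 = 0 \<and> s 2 3 = 0 \<and> s 2 4 = 0"
    "b 3 = 0 \<Longrightarrow> s 1 3 = 0 \<and> s 2 3 = 0 \<and> s 3 4 = 0"
    "b 4 = 0 \<Longrightarrow> s 1 4 = 0 \<and> s 2 4 = 0 \<and> s 3 4 = 0"
    using rows s_nonneg[of 1 2] s_nonneg[of 1 3] s_nonneg[of 1 4]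
      s_nonneg[of 2 3] s_nonneg[of 2 4] s_nonneg[of 3 4] by auto
  show thesis
  proof (rule that[OF r_nonneg])
    show "a 1 = b 2 * r 1 2 + b 3 * r 1 3 + b 4 * r 1 4"
      unfolding r_def
      by (rule sym, rule edge_weight_row) (use B_def B_pos rows zero in auto)
    show "a 2 = b 1 * r 1 2 + b 3 * r 2 3 + b 4 * r 2 4"
      unfolding r_def edge_weight_commute[of B "a 1"]
      by (rule sym, rule edge_weight_row) (use B_def B_pos rows zero in auto)
    show "a 3 = b 1 * r 1 3 + b 2 * r 2 3 + b 4 * r 3 4"
      unfolding r_def edge_weight_commute[of B "a 1" _ "a 3"] edge_weight_commute[of B "a 2" _ "a 3"]
      by (rule sym, rule edge_weight_row) (use B_def B_pos rows zero in auto)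
    show "a 4 = b 1 * r 1 4 + b 2 * r 2 4 + b 3 * r 3 4"
      unfolding r_def edge_weight_commute[of B _ _ "a 4"]
      by (rule sym, rule edge_weight_row) (use B_def B_pos rows zero in auto)
  qed
qed

theorem lemma20:
  fixes F :: "nat \<Rightarrow> nat \<Rightarrow> nat \<Rightarrow> nat \<Rightarrow> rat"
  assumes nonneg: "\<forall>x1\<in>{0,1}. \<forall>x2\<in>{0,1}. \<forall>x3\<in>{0,1}. \<forall>x4\<in>{0,1}. F x1 x2 x3 x4 \<ge> 0"
    and nz: "\<not> (F 0 1 1 1 = 0 \<and> F 1 0 1 1 = 0 \<and> F 1 1 0 1 = 0 \<and> F 1 1 1 0 = 0)"
    and even: "\<forall>x1\<in>{0,1}. \<forall>x2\<in>{0,1}. \<forall>x3\<in>{0,1}. \<forall>x4\<in>{0,1}.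
                 even (x1 + x2 + x3 + x4) \<longrightarrow> F x1 x2 x3 x4 = 0"
    and ineq: "\<forall>x1\<in>{0,1}. \<forall>x2\<in>{0,1}. \<forall>x3\<in>{0,1}. \<forall>x4\<in>{0,1}.
        F x1 x2 x3 x4 * F (1-x1) (1-x2) (1-x3) (1-x4)
        \<le> F x1 x2 (1-x3) (1-x4) * F (1-x1) (1-x2) x3 x4
         + F x1 (1-x2) x3 (1-x4) * F (1-x1) x2 (1-x3) x4
         + F x1 (1-x2) (1-x3) x4 * F (1-x1) x2 x3 (1-x4)"
  shows "has_matchings_circuit F"
proof -
  define a where "a k = F (of_bool (k = 1)) (of_bool (k = 2)) (of_bool (k = 3)) (of_bool (k = 4))"
    for k :: nat
  define b where "b k = F (of_bool (k \<noteq> 1)) (of_bool (k \<noteq> 2)) (of_bool (k \<noteq> 3)) (of_bool (k \<noteq> 4))"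
    for k :: nat
  have a_nonneg: "a k \<ge> 0" and b_nonneg: "b k \<ge> 0" for k
    using nonneg by (simp_all add: a_def b_def of_bool_def)
  have "b 1 \<noteq> 0 \<or> b 2 \<noteq> 0 \<or> b 3 \<noteq> 0 \<or> b 4 \<noteq> 0"
    using nz by (simp add: b_def)
  then have B_pos: "b 1 + b 2 + b 3 + b 4 > 0"
    using b_nonneg[of 1] b_nonneg[of 2] b_nonneg[of 3] b_nonneg[of 4] by (auto simp: less_le)
  have polygon:
    "a 1 * b 1 \<le> a 2 * b 2 + a 3 * b 3 + a 4 * b 4"
    "a 2 * b 2 \<le> a 1 * b 1 + a 3 * b 3 + a 4 * b 4"
    "a 3 * b 3 \<le> a 1 * b 1 + a 2 * b 2 + a 4 * b 4"
    "a 4 * b 4 \<le> a 1 * b 1 + a 2 * b 2 + a 3 * b 3"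
    using ineq[rule_format, of 1 0 0 0] ineq[rule_format, of 0 1 0 0]
      ineq[rule_format, of 0 0 1 0] ineq[rule_format, of 0 0 0 1]
    by (simp_all add: a_def b_def mult.commute add_ac)
  obtain r :: "nat \<Rightarrow> nat \<Rightarrow> rat" where "\<And>i j. r i j \<ge> 0"
    and "a 1 = b 2 * r 1 2 + b 3 * r 1 3 + b 4 * r 1 4"
    and "a 2 = b 1 * r 1 2 + b 3 * r 2 3 + b 4 * r 2 4"
    and "a 3 = b 1 * r 1 3 + b 2 * r 2 3 + b 4 * r 3 4"
    and "a 4 = b 1 * r 1 4 + b 2 * r 2 4 + b 3 * r 3 4"
    using K4_weights_with_weighted_degrees[OF a_nonneg b_nonneg B_pos polygon] by blast
  then show ?thesis
    using b_nonneg even by (intro has_matchings_circuit_K5[of b r]) (simp_all add: a_def b_def)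
qed

end
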